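(* Assume $(K-1)P^2<1$. Then: (i) the functions $h_N(z)=\psi^{s*}_N(z,z_0)+\frac{1}{2\pi}\log|z-z_0|$ are harmonic on $D\cap\mathbb{C}$ and converge uniformly on every compact subset of $D\cap\mathbb{C}$. Consequently $\psi^s(z,z_0):=\lim_{N\to\infty}\psi^{s*}_N(z,z_0)$ exists for every finite $z\in D\setminus\{z_0\}$, is harmonic in $z$ on $(D\cap\mathbb{C})\setminus\{z_0\}$, and $\psi^s(z,z_0)+\frac{1}{2\pi}\log|z-z_0|$ extends to a harmonic function in a neighborhood of $z_0$; (ii) for each $j=1,\ldots,K$, the restrictions of $\psi^{s*}_N(\cdot,z_0)$ to the circle $L_j$ converge, uniformly in $z\in L_j$, to a finite constant $C_j$ (independent of $z\in L_j$).
   Context: Let $K\ge 2$. Let $L_j=\{z:|z-c_j|=R_j\}$, $j=1,\dots,K$, be circles in $\mathbb{C}$ whose closed disks $\{|z-c_j|\le R_j\}$ are pairwise disjoint, and let $D$ be the domain in the extended complex plane exterior to all of these closed disks (so $D$ contains $\infty$). Write $\operatorname{int}L_j$ for the open disk $|z-c_j|<R_j$. Let $T_j(z)=c_j+\frac{R_j^2}{\bar z-\bar c_j}$ be the inversion in $L_j$ (with $T_j(c_j)=\infty$, $T_j(\infty)=c_j$). Fix a finite point $z_0\in D$. For $M\ge 0$, the level-$M$ points are the multiset of points $T_{i_1}\circ T_{i_2}\circ\cdots\circ T_{i_M}(z_0)$ over all index words $(i_1,\ldots,i_M)\in\{1,\ldots,K\}^M$ with $i_k\ne i_{k+1}$ for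 $k=1,\ldots,M-1$ (level 0 is the single point $z_0$); there are $K(K-1)^{M-1}$ level-$M$ points for $M\ge1$, each lying in $\operatorname{int}L_{i_1}$. Define $\psi^s_N(z,z_0)=-\frac{1}{2\pi}\sum_{M=0}^{N}(-1)^M\sum_{\zeta\in\text{level }M}\log|z-\zeta|$ (sum with multiplicity), and $\psi^{s*}_N(z,z_0)=\frac{(K-1)\psi^s_N(z,z_0)+\psi^s_{N+1}(z,z_0)}{K}$. Define $P_j=\max\left\{\frac{R_j}{|z_0-c_j|},\ \frac{R_j}{|c_j-c_l|-R_l}\ (l=1,\ldots,K,\ l\ne j)\right\}$ and $P=\max\{P_1,\ldots,P_K\}$. *)

theory Defs
  imports "HOL-Analysis.Analysis"
begin

text \<open>Directional (partial) derivative of a real-valued function on the complex plane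
  in direction v (v = 1: d/dx, v = i: d/dy).\<close>
definition pdiff :: "complex \<Rightarrow> (complex \<Rightarrow> real) \<Rightarrow> complex \<Rightarrow> real" where
  "pdiff v f z = deriv (\<lambda>t::real. f (z + of_real t * v)) 0"

definition pdiff_exists_on :: "complex set \<Rightarrow> complex \<Rightarrow> (complex \<Rightarrow> real) \<Rightarrow> bool" where
  "pdiff_exists_on S v f \<longleftrightarrow> (\<forall>z\<in>S. (\<lambda>t::real. f (z + of_real t * v)) differentiable (at 0))"

definition C2_on :: "complex set \<Rightarrow> (complex \<Rightarrow> real) \<Rightarrow> bool" where
  "C2_on S f \<longleftrightarrow> continuous_on S f \<and>
     (\<forall>v\<in>{1, \<i>}. pdiff_exists_on S v f \<and> continuous_on S (pdiff v f) \<and>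
        (\<forall>u\<in>{1, \<i>}. pdiff_exists_on S u (pdiff v f) \<and> continuous_on S (pdiff u (pdiff v f))))"

definition harmonic_on :: "complex set \<Rightarrow> (complex \<Rightarrow> real) \<Rightarrow> bool" where
  "harmonic_on S f \<longleftrightarrow> open S \<and> C2_on S f \<and>
     (\<forall>z\<in>S. pdiff 1 (pdiff 1 f) z + pdiff \<i> (pdiff \<i> f) z = 0)"

text \<open>Finite part D \<inter> C of the exterior domain of the circles L_j, j = 1..K.\<close>
definition Dfin :: "nat \<Rightarrow> (nat \<Rightarrow> complex) \<Rightarrow> (nat \<Rightarrow> real) \<Rightarrow> complex set" where
  "Dfin K c R = {z. \<forall>j\<in>{1..K}. cmod (z - c j) > R j}"

definition inv_circ :: "(nat \<Rightarrow> complex) \<Rightarrow> (nat \<Rightarrow> real) \<Rightarrow> nat \<Rightarrow> complex \<Rightarrow> complex" where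
  "inv_circ c R j z = c j + complex_of_real ((R j)\<^sup>2) / cnj (z - c j)"

definition words :: "nat \<Rightarrow> nat \<Rightarrow> nat list set" where
  "words K M = {w. length w = M \<and> set w \<subseteq> {1..K} \<and> (\<forall>k. Suc k < M \<longrightarrow> w ! k \<noteq> w ! Suc k)}"

definition word_pt :: "(nat \<Rightarrow> complex) \<Rightarrow> (nat \<Rightarrow> real) \<Rightarrow> complex \<Rightarrow> nat list \<Rightarrow> complex" where
  "word_pt c R z0 w = foldr (inv_circ c R) w z0"

definition psi_s :: "nat \<Rightarrow> (nat \<Rightarrow> complex) \<Rightarrow> (nat \<Rightarrow> real) \<Rightarrow> complex \<Rightarrow> nat \<Rightarrow> complex \<Rightarrow> real" where
  "psi_s K c R z0 N z = - (1 / (2 * pi)) *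
     (\<Sum>M\<le>N. (-1) ^ M * (\<Sum>w\<in>words K M. ln (cmod (z - word_pt c R z0 w))))"

definition psi_s_star :: "nat \<Rightarrow> (nat \<Rightarrow> complex) \<Rightarrow> (nat \<Rightarrow> real) \<Rightarrow> complex \<Rightarrow> nat \<Rightarrow> complex \<Rightarrow> real" where
  "psi_s_star K c R z0 N z =
     ((real K - 1) * psi_s K c R z0 N z + psi_s K c R z0 (Suc N) z) / real K"

definition Pj :: "nat \<Rightarrow> (nat \<Rightarrow> complex) \<Rightarrow> (nat \<Rightarrow> real) \<Rightarrow> complex \<Rightarrow> nat \<Rightarrow> real" where
  "Pj K c R z0 j = Max ({R j / cmod (z0 - c j)} \<union>
       {R j / (cmod (c j - c l) - R l) | l. l \<in> {1..K} \<and> l \<noteq> j})"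

definition Pmax :: "nat \<Rightarrow> (nat \<Rightarrow> complex) \<Rightarrow> (nat \<Rightarrow> real) \<Rightarrow> complex \<Rightarrow> real" where
  "Pmax K c R z0 = Max (Pj K c R z0 ` {1..K})"

end

theory Submission
  imports Defs "HOL-Complex_Analysis.Complex_Analysis"
begin

text \<open>
  For an admissible word \<open>w = i\<^sub>1 \<dots> i\<^sub>M\<close> the point \<open>p(w)\<close> lies in the disk
  \<open>|z - c(i\<^sub>1)| \<le> R(i\<^sub>1) P\<close>, and every inversion \<open>T\<^sub>j\<close> is a \<open>P\<^sup>2\<close>-contraction on the region from
  which points are fed into it, so \<open>|p(w) - p(w i)| \<le> B P\<^sup>2\<^sup>M\<close> with \<open>B\<close> independent of \<open>w\<close>.
  Regrouped, \<open>\<psi>\<^sup>s\<^sup>*\<^sub>N\<close> is a telescoping series whose \<open>M\<close>-th block is the sum over \<open>w\<close> and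
  \<open>i \<noteq> last w\<close> of \<open>log|z - p(w)| - log|z - p(w i)|\<close>; as there are \<open>K(K-1)\<^sup>M\<^sup>-\<^sup>1\<close> words of
  length \<open>M\<close>, the block is \<open>O(((K-1)P\<^sup>2)\<^sup>M)\<close> uniformly on sets staying away from the disks.
  The same bound holds for branches of the complex logarithm, so the limit is locally the real
  part of a uniform limit of holomorphic functions, hence harmonic.  On \<open>L\<^sub>j\<close> the reflection
  identity \<open>|z - T\<^sub>j a| = R\<^sub>j |z - a| / |a - c\<^sub>j|\<close> turns the words beginning with \<open>j\<close> into the
  remaining ones plus a constant, which leaves a constant plus a block of the same decaying type.
\<close>

section \<open>Real parts of holomorphic functions are harmonic\<close>

lemma has_real_derivative_Re_holomorphic:
  fixes g :: "complex \<Rightarrow> complex" and f :: "complex \<Rightarrow> real"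
  assumes holo: "g holomorphic_on ball a r" and y: "y \<in> ball a r"
    and eq: "\<forall>x\<in>ball a r. f x = Re (g x)"
  shows "((\<lambda>t::real. f (y + of_real t * v)) has_real_derivative Re (deriv g y * v)) (at 0)"
proof -
  have gd: "(g has_field_derivative deriv g y) (at y)"
    using holomorphic_derivI[OF holo open_ball y] by simp
  have line: "((\<lambda>t::real. y + of_real t * v) has_vector_derivative v) (at 0)"
    by (auto intro!: derivative_eq_intros)
  have "((g \<circ> (\<lambda>t::real. y + of_real t * v)) has_vector_derivative deriv g y * v) (at 0)"
    using field_vector_diff_chain_at[OF line, of g "deriv g y"] gd by (simp add: mult.commute)
  then have Re_g: "((\<lambda>t::real. Re (g (y + of_real t * v))) has_real_derivative Re (deriv g y * v)) (at 0)"
    by (intro has_field_derivative_Re) (simp add: o_def)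
  have "open ((\<lambda>t::real. y + of_real t * v) -` ball a r)"
    by (intro continuous_open_vimage) (auto intro!: continuous_intros)
  then have "eventually (\<lambda>t::real. t \<in> (\<lambda>t::real. y + of_real t * v) -` ball a r) (nhds 0)"
    using y by (intro eventually_nhds_in_open) auto
  then have "eventually (\<lambda>t::real. f (y + of_real t * v) = Re (g (y + of_real t * v))) (nhds 0)"
    using eq by (auto elim!: eventually_mono)
  then show ?thesis
    by (rule DERIV_cong_ev[THEN iffD2, OF refl _ refl Re_g])
qed

lemma pdiff_Re_holomorphic:
  assumes "g holomorphic_on ball a r" "y \<in> ball a r" "\<forall>x\<in>ball a r. f x = Re (g x)"
  shows "pdiff v f y = Re (deriv g y * v)"
    and "(\<lambda>t::real. f (y + of_real t * v)) differentiable (at 0)"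
  using has_real_derivative_Re_holomorphic[OF assms, of v]
  by (auto simp: pdiff_def DERIV_imp_deriv real_differentiable_def)

definition locally_Re_holomorphic :: "complex set \<Rightarrow> (complex \<Rightarrow> real) \<Rightarrow> bool" where
  "locally_Re_holomorphic S f \<longleftrightarrow>
     (\<forall>a\<in>S. \<exists>r>0. \<exists>g. g holomorphic_on ball a r \<and> (\<forall>x\<in>ball a r. f x = Re (g x)))"

lemma locally_Re_holomorphic_pdiff:
  assumes "locally_Re_holomorphic S f"
  shows "locally_Re_holomorphic S (pdiff v f)" and "pdiff_exists_on S v f"
proof -
  {
    fix a assume "a \<in> S"
    then obtain r g where r: "r > 0" "g holomorphic_on ball a r" "\<forall>x\<in>ball a r. f x = Re (g x)"
      using assms unfolding locally_Re_holomorphic_def by blast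
    have "(\<lambda>x. deriv g x * v) holomorphic_on ball a r"
      using r by (intro holomorphic_intros) auto
    moreover have "\<forall>x\<in>ball a r. pdiff v f x = Re (deriv g x * v)"
      using pdiff_Re_holomorphic(1)[OF r(2) _ r(3)] by blast
    ultimately have "\<exists>r>0. \<exists>g. g holomorphic_on ball a r \<and> (\<forall>x\<in>ball a r. pdiff v f x = Re (g x))"
      using r(1) by blast
    moreover have "(\<lambda>t::real. f (a + of_real t * v)) differentiable (at 0)"
      using pdiff_Re_holomorphic(2)[OF r(2) _ r(3)] r(1) by simp
    ultimately have "(\<exists>r>0. \<exists>g. g holomorphic_on ball a r \<and> (\<forall>x\<in>ball a r. pdiff v f x = Re (g x)))
      \<and> (\<lambda>t::real. f (a + of_real t * v)) differentiable (at 0)" ..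
  }
  then show "locally_Re_holomorphic S (pdiff v f)" "pdiff_exists_on S v f"
    unfolding locally_Re_holomorphic_def pdiff_exists_on_def by blast+
qed

lemma continuous_on_locally_Re_holomorphic:
  assumes "locally_Re_holomorphic S f" "open S"
  shows "continuous_on S f"
  unfolding continuous_on_eq_continuous_at[OF assms(2)]
proof
  fix a assume "a \<in> S"
  then obtain r g where r: "r > 0" "g holomorphic_on ball a r" "\<forall>x\<in>ball a r. f x = Re (g x)"
    using assms unfolding locally_Re_holomorphic_def by blast
  have ev: "eventually (\<lambda>x. f x = Re (g x)) (nhds a)"
    using r by (intro eventually_nhds_in_open[of "ball a r", THEN eventually_mono]) auto
  have "isCont (\<lambda>x. Re (g x)) a"
    using r holomorphic_on_imp_continuous_on[OF r(2)]
    by (intro isCont_Re) (simp add: continuous_on_eq_continuous_at)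
  then show "isCont f a" using isCont_cong[OF ev] by simp
qed

lemma harmonic_on_locally_Re_holomorphic:
  assumes f: "locally_Re_holomorphic S f" and S: "open S"
  shows "harmonic_on S f"
proof -
  note Df = locally_Re_holomorphic_pdiff[OF f]
  have C2: "C2_on S f"
    unfolding C2_on_def
    using continuous_on_locally_Re_holomorphic[OF f S] Df
      continuous_on_locally_Re_holomorphic[OF Df(1) S]
      continuous_on_locally_Re_holomorphic[OF locally_Re_holomorphic_pdiff(1)[OF Df(1)] S]
      locally_Re_holomorphic_pdiff(2)[OF Df(1)]
    by blast
  have "pdiff 1 (pdiff 1 f) z + pdiff \<i> (pdiff \<i> f) z = 0" if z: "z \<in> S" for z
  proof -
    obtain r g where r: "r > 0" and g: "g holomorphic_on ball z r" "\<forall>x\<in>ball z r. f x = Re (g x)"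
      using f z unfolding locally_Re_holomorphic_def by blast
    have zb: "z \<in> ball z r" using r by simp
    have dg: "deriv g holomorphic_on ball z r" using g by (intro holomorphic_intros) auto
    have h1: "(\<lambda>x. deriv g x * v) holomorphic_on ball z r" for v
      by (rule holomorphic_on_mult[OF dg holomorphic_on_const])
    have e1: "\<forall>x\<in>ball z r. pdiff v f x = Re (deriv g x * v)" for v
      using pdiff_Re_holomorphic(1)[OF g(1) _ g(2)] by blast
    have "pdiff u (pdiff v f) z = Re (deriv (\<lambda>x. deriv g x * v) z * u)" for u v
      by (rule pdiff_Re_holomorphic(1)[OF h1 zb e1])
    moreover have "deriv (\<lambda>x. deriv g x * v) z = deriv (deriv g) z * v" for v
      using holomorphic_on_imp_differentiable_at[OF dg open_ball zb] by (rule deriv_cmult_right)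
    ultimately show ?thesis by simp
  qed
  then show ?thesis unfolding harmonic_on_def using C2 S by blast
qed

lemma locally_Re_holomorphic_subset:
  "locally_Re_holomorphic S f \<Longrightarrow> T \<subseteq> S \<Longrightarrow> locally_Re_holomorphic T f"
  unfolding locally_Re_holomorphic_def by blast

lemma locally_Re_holomorphic_cong:
  assumes f: "locally_Re_holomorphic S f" and S: "open S" and eq: "\<forall>z\<in>S. f z = g z"
  shows "locally_Re_holomorphic S g"
  unfolding locally_Re_holomorphic_def
proof
  fix a assume a: "a \<in> S"
  obtain r h where r: "r > 0" "h holomorphic_on ball a r" "\<forall>x\<in>ball a r. f x = Re (h x)"
    using f a unfolding locally_Re_holomorphic_def by blast
  obtain e where e: "e > 0" "ball a e \<subseteq> S" using S a openE by blast
  have "h holomorphic_on ball a (min r e)" using r(2) by (rule holomorphic_on_subset) auto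
  moreover have "\<forall>x\<in>ball a (min r e). g x = Re (h x)"
  proof
    fix x assume "x \<in> ball a (min r e)"
    then have "x \<in> ball a r" "x \<in> S" using e(2) by auto
    then show "g x = Re (h x)" using r(3) eq by metis
  qed
  ultimately show "\<exists>r>0. \<exists>h. h holomorphic_on ball a r \<and> (\<forall>x\<in>ball a r. g x = Re (h x))"
    using r(1) e(1) by (intro exI[of _ "min r e"]) auto
qed

lemma locally_Re_holomorphic_diff_scaled:
  assumes f: "locally_Re_holomorphic S f" and g: "locally_Re_holomorphic S g"
  shows "locally_Re_holomorphic S (\<lambda>z. f z - t * g z)"
  unfolding locally_Re_holomorphic_def
proof
  fix a assume a: "a \<in> S"
  obtain r1 h1 where 1: "r1 > 0" "h1 holomorphic_on ball a r1" "\<forall>x\<in>ball a r1. f x = Re (h1 x)"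
    using f a unfolding locally_Re_holomorphic_def by blast
  obtain r2 h2 where 2: "r2 > 0" "h2 holomorphic_on ball a r2" "\<forall>x\<in>ball a r2. g x = Re (h2 x)"
    using g a unfolding locally_Re_holomorphic_def by blast
  have "h1 holomorphic_on ball a (min r1 r2)"
    by (rule holomorphic_on_subset[OF 1(2)]) auto
  moreover have "h2 holomorphic_on ball a (min r1 r2)"
    by (rule holomorphic_on_subset[OF 2(2)]) auto
  ultimately have "(\<lambda>x. h1 x - of_real t * h2 x) holomorphic_on ball a (min r1 r2)"
    by (intro holomorphic_intros)
  moreover have "\<forall>x\<in>ball a (min r1 r2). f x - t * g x = Re (h1 x - of_real t * h2 x)"
    using 1(3) 2(3) by simp
  ultimately show "\<exists>r>0. \<exists>h. h holomorphic_on ball a r \<and> (\<forall>x\<in>ball a r. f x - t * g x = Re (h x))"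
    using 1(1) 2(1) by (intro exI[of _ "min r1 r2"]) auto
qed

lemma tendsto_imp_uniform_limit_const:
  "(f \<longlongrightarrow> L) F \<Longrightarrow> uniform_limit A (\<lambda>n x. f n) (\<lambda>x. L) F"
  by (auto simp: uniform_limit_iff tendsto_iff)

section \<open>Logarithmic estimates\<close>

lemma abs_ln_diff_le:
  fixes x y d :: real
  assumes "x \<ge> d" "y \<ge> d" "d > 0"
  shows "\<bar>ln x - ln y\<bar> \<le> \<bar>x - y\<bar> / d"
proof -
  have one_side: "ln x - ln y \<le> \<bar>x - y\<bar> / d" if "x \<ge> d" "y \<ge> d" for x y
  proof -
    have "ln (x / y) \<le> x / y - 1" using that assms by (intro ln_le_minus_one) auto
    then have "ln x - ln y \<le> (x - y) / y" using that assms by (simp add: ln_div field_simps)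
    also have "\<dots> \<le> \<bar>x - y\<bar> / y" by (intro divide_right_mono) (use that assms in auto)
    also have "\<dots> \<le> \<bar>x - y\<bar> / d" by (intro divide_left_mono) (use that assms in auto)
    finally show ?thesis .
  qed
  show ?thesis using one_side[of x y] one_side[of y x] assms by (simp add: abs_minus_commute)
qed

lemma abs_ln_norm_diff_le:
  fixes z p q :: complex
  assumes "cmod (z - p) \<ge> d" "cmod (z - q) \<ge> d" "d > 0"
  shows "\<bar>ln (cmod (z - p)) - ln (cmod (z - q))\<bar> \<le> cmod (p - q) / d"
proof -
  have "\<bar>cmod (z - p) - cmod (z - q)\<bar> \<le> cmod (p - q)"
    using norm_triangle_ineq3[of "z - p" "z - q"] by (simp add: norm_minus_commute)
  then show ?thesis
    using abs_ln_diff_le[OF assms] assms(3) by (smt (verit) divide_right_mono)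
qed

lemma norm_Ln_diff_le:
  fixes u v :: complex
  assumes "cmod (u - 1) < 1/2" "cmod (v - 1) < 1/2"
  shows "cmod (Ln u - Ln v) \<le> 2 * cmod (u - v)"
proof (rule field_differentiable_bound[of "ball 1 (1/2)" Ln inverse])
  fix z :: complex assume "z \<in> ball 1 (1/2)"
  then have z: "cmod (z - 1) < 1/2" by (simp add: dist_norm norm_minus_commute)
  have "Re z > 0" using abs_Re_le_cmod[of "z - 1"] z by simp
  then have "z \<notin> \<real>\<^sub>\<le>\<^sub>0" by (auto simp: complex_nonpos_Reals_iff)
  then show "(Ln has_field_derivative inverse z) (at z within ball 1 (1/2))"
    by (rule has_field_derivative_at_within[OF has_field_derivative_Ln])
  have "1 \<le> cmod z + cmod (z - 1)" using norm_triangle_ineq2[of 1 z] by (simp add: norm_minus_commute)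
  then have "inverse (cmod z) \<le> inverse (1/2)" using z by (intro le_imp_inverse_le) auto
  then show "cmod (inverse z) \<le> 2" by (simp add: norm_inverse)
next
  show "u \<in> ball 1 (1/2)" "v \<in> ball 1 (1/2)"
    using assms by (auto simp: dist_norm norm_minus_commute)
qed simp

text \<open>A branch of \<open>log (z - p)\<close> up to an additive constant, vanishing at \<open>a\<close>; it is
  holomorphic wherever \<open>(z - p) / (a - p)\<close> stays within \<open>1/2\<close> of \<open>1\<close>.\<close>
definition Ln_rel :: "complex \<Rightarrow> complex \<Rightarrow> complex \<Rightarrow> complex" where
  "Ln_rel a p z = Ln ((z - p) / (a - p))"

lemma Re_Ln_rel:
  assumes "z \<noteq> p" "a \<noteq> p"
  shows "Re (Ln_rel a p z) = ln (cmod (z - p)) - ln (cmod (a - p))"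
  using assms by (simp add: Ln_rel_def norm_divide ln_div)

lemma Ln_rel_arg_near_1:
  assumes "cmod (a - p) \<ge> d" "d > 0" "z \<in> ball a (d / 2)"
  shows "cmod ((z - p) / (a - p) - 1) < 1 / 2"
proof -
  have ap: "a - p \<noteq> 0" using assms by auto
  have "cmod ((z - p) / (a - p) - 1) = cmod (z - a) / cmod (a - p)"
    using ap by (simp add: norm_divide field_simps)
  also have "\<dots> < (d / 2) / cmod (a - p)"
    using assms ap by (intro divide_strict_right_mono) (auto simp: dist_norm norm_minus_commute)
  also have "\<dots> \<le> (d / 2) / d"
    using assms by (intro divide_left_mono mult_pos_pos) auto
  finally show ?thesis using assms by simp
qed

lemma holomorphic_on_Ln_rel:
  assumes "cmod (a - p) \<ge> d" "d > 0"
  shows "Ln_rel a p holomorphic_on ball a (d / 2)"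
  unfolding Ln_rel_def[abs_def]
proof (intro holomorphic_on_Ln' holomorphic_intros)
  fix z assume z: "z \<in> ball a (d / 2)"
  have "\<bar>Re ((z - p) / (a - p)) - 1\<bar> < 1 / 2"
    using abs_Re_le_cmod[of "(z - p) / (a - p) - 1"] Ln_rel_arg_near_1[OF assms z] by simp
  then show "(z - p) / (a - p) \<notin> \<real>\<^sub>\<le>\<^sub>0" by (auto simp: complex_nonpos_Reals_iff)
qed (use assms in auto)

lemma norm_Ln_rel_diff_le:
  assumes "cmod (a - p) \<ge> d" "cmod (a - q) \<ge> d" "d > 0" "z \<in> ball a (d / 2)"
  shows "cmod (Ln_rel a p z - Ln_rel a q z) \<le> cmod (p - q) / d"
proof -
  have ap: "a - p \<noteq> 0" "a - q \<noteq> 0" using assms by auto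
  have "cmod (Ln_rel a p z - Ln_rel a q z) \<le> 2 * cmod ((z - p) / (a - p) - (z - q) / (a - q))"
    unfolding Ln_rel_def
    by (rule norm_Ln_diff_le[OF Ln_rel_arg_near_1[OF assms(1,3,4)] Ln_rel_arg_near_1[OF assms(2,3,4)]])
  also have "(z - p) / (a - p) - (z - q) / (a - q) = (z - a) * (p - q) / ((a - p) * (a - q))"
    using ap by (simp add: field_simps)
  also have "2 * cmod \<dots> \<le> 2 * ((d / 2) * cmod (p - q) / (d * d))"
  proof -
    have "cmod (z - a) \<le> d / 2" using assms(4) by (simp add: dist_norm norm_minus_commute)
    moreover have "d * d \<le> cmod (a - p) * cmod (a - q)" using assms by (intro mult_mono) auto
    ultimately have "cmod (z - a) * cmod (p - q) / (cmod (a - p) * cmod (a - q))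
        \<le> (d / 2) * cmod (p - q) / (d * d)"
      using assms by (intro frac_le mult_right_mono) auto
    then show ?thesis by (simp add: norm_mult norm_divide)
  qed
  also have "\<dots> = cmod (p - q) / d" using assms by (simp add: field_simps)
  finally show ?thesis .
qed

lemma locally_Re_holomorphic_ln_dist:
  assumes "p \<notin> S"
  shows "locally_Re_holomorphic S (\<lambda>z. ln (cmod (z - p)))"
  unfolding locally_Re_holomorphic_def
proof
  fix a assume "a \<in> S"
  then have d: "cmod (a - p) > 0" using assms by auto
  have hol: "(\<lambda>z. Ln_rel a p z + of_real (ln (cmod (a - p)))) holomorphic_on ball a (cmod (a - p) / 2)"
    by (intro holomorphic_on_add holomorphic_on_const holomorphic_on_Ln_rel[OF order.refl d])
  have eq: "ln (cmod (x - p)) = Re (Ln_rel a p x + of_real (ln (cmod (a - p))))"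
    if "x \<in> ball a (cmod (a - p) / 2)" for x
  proof -
    have "cmod (a - p) \<le> dist a x + cmod (x - p)"
      using norm_triangle_ineq[of "a - x" "x - p"] by (simp add: dist_norm)
    then have "x \<noteq> p" using that d by (auto simp: dist_norm)
    then show ?thesis using d by (simp add: Re_Ln_rel)
  qed
  have "cmod (a - p) / 2 > 0" using d by simp
  then show "\<exists>r>0. \<exists>g. g holomorphic_on ball a r \<and>
      (\<forall>x\<in>ball a r. ln (cmod (x - p)) = Re (g x))"
    using hol eq by blast
qed

section \<open>Admissible words\<close>

lemma words_successively:
  "words K M = {w. length w = M \<and> set w \<subseteq> {1..K} \<and> successively (\<noteq>) w}"
  by (auto simp: words_def successively_conv_nth)

lemma words_0: "words K 0 = {[]}"
  by (auto simp: words_def)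

lemma Cons_words_iff:
  "i # v \<in> words K (Suc M) \<longleftrightarrow> i \<in> {1..K} \<and> v \<in> words K M \<and> (v \<noteq> [] \<longrightarrow> hd v \<noteq> i)"
  by (auto simp: words_successively successively_Cons)

lemma snoc_words_iff:
  "w @ [i] \<in> words K (Suc M) \<longleftrightarrow> w \<in> words K M \<and> i \<in> {1..K} \<and> (w \<noteq> [] \<longrightarrow> last w \<noteq> i)"
  by (auto simp: words_successively successively_append_iff)

lemma finite_words: "finite (words K M)"
proof (rule finite_subset)
  show "words K M \<subseteq> {w. set w \<subseteq> {1..K} \<and> length w = M}" by (auto simp: words_def)
qed (rule finite_lists_length_eq, simp)

lemma length_words: "w \<in> words K M \<Longrightarrow> length w = M"
  by (simp add: words_def)

lemma set_words: "w \<in> words K M \<Longrightarrow> set w \<subseteq> {1..K}"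
  by (simp add: words_def)

lemma hd_words: "w \<in> words K M \<Longrightarrow> w \<noteq> [] \<Longrightarrow> hd w \<in> {1..K}"
  using set_words hd_in_set by blast

lemma last_words: "w \<in> words K M \<Longrightarrow> w \<noteq> [] \<Longrightarrow> last w \<in> {1..K}"
  using set_words last_in_set by blast

lemma words_nonempty: "w \<in> words K M \<Longrightarrow> M \<ge> 1 \<Longrightarrow> w \<noteq> []"
  using length_words by fastforce

definition extensions :: "nat \<Rightarrow> nat list \<Rightarrow> nat set" where
  "extensions K w = {1..K} - {last w}"

lemma finite_extensions: "finite (extensions K w)"
  by (simp add: extensions_def)

lemma card_extensions: "w \<in> words K M \<Longrightarrow> w \<noteq> [] \<Longrightarrow> card (extensions K w) = K - 1"
  using last_words[of w K M] by (simp add: extensions_def card_Diff_singleton)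

lemma snoc_extension_words:
  "w \<in> words K M \<Longrightarrow> M \<ge> 1 \<Longrightarrow> i \<in> extensions K w \<Longrightarrow> w @ [i] \<in> words K (Suc M)"
  using snoc_words_iff words_nonempty by (auto simp: extensions_def)

lemma sum_words_Suc:
  assumes M: "M \<ge> 1" and Q: "\<And>w i. w \<noteq> [] \<Longrightarrow> Q (w @ [i]) = Q w"
  shows "(\<Sum>u\<in>{u\<in>words K (Suc M). Q u}. g u)
       = (\<Sum>w\<in>{w\<in>words K M. Q w}. \<Sum>i\<in>extensions K w. g (w @ [i]))"
proof -
  let ?A = "Sigma {w\<in>words K M. Q w} (extensions K)"
  have "(\<Sum>w\<in>{w\<in>words K M. Q w}. \<Sum>i\<in>extensions K w. g (w @ [i])) = (\<Sum>(w, i)\<in>?A. g (w @ [i]))"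
    by (rule sum.Sigma) (auto simp: finite_extensions finite_words)
  also have "\<dots> = (\<Sum>u\<in>(\<lambda>(w, i). w @ [i]) ` ?A. g u)"
    by (rule sum.reindex_cong[symmetric]) (auto simp: inj_on_def)
  also have "(\<lambda>(w, i). w @ [i]) ` ?A = {u\<in>words K (Suc M). Q u}"
  proof
    show "(\<lambda>(w, i). w @ [i]) ` ?A \<subseteq> {u\<in>words K (Suc M). Q u}"
    proof clarify
      fix w i assume "w \<in> words K M" "Q w" "i \<in> extensions K w"
      then show "w @ [i] \<in> words K (Suc M) \<and> Q (w @ [i])"
        using M Q snoc_extension_words words_nonempty by blast
    qed
    show "{u\<in>words K (Suc M). Q u} \<subseteq> (\<lambda>(w, i). w @ [i]) ` ?A"
    proof clarify
      fix u assume u: "u \<in> words K (Suc M)" "Q u"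
      have "length (butlast u) = M" "u \<noteq> []" using length_words[OF u(1)] by auto
      then have ne: "butlast u \<noteq> []" and ueq: "u = butlast u @ [last u]"
        using M by (auto simp del: length_butlast)
      then have "butlast u \<in> words K M" "last u \<in> extensions K (butlast u)"
        using u(1) snoc_words_iff[of "butlast u" "last u"] ne by (auto simp: extensions_def)
      moreover have "Q (butlast u)" using Q[OF ne, of "last u"] ueq u(2) by simp
      ultimately show "u \<in> (\<lambda>(w, i). w @ [i]) ` ?A"
        using ueq by (intro image_eqI[of _ _ "(butlast u, last u)"]) auto
    qed
  qed
  finally show ?thesis ..
qed

lemma card_words: "M \<ge> 1 \<Longrightarrow> card (words K M) = K * (K - 1) ^ (M - 1)"
proof (induction M rule: dec_induct)
  case base
  have "words K 1 = (\<lambda>i. [i]) ` {1..K}"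
    by (auto simp: words_def length_Suc_conv)
  then show ?case by (simp add: card_image inj_on_def)
next
  case (step M)
  have "card (words K (Suc M)) = (\<Sum>u\<in>{u\<in>words K (Suc M). True}. 1)" by simp
  also have "\<dots> = (\<Sum>w\<in>{w\<in>words K M. True}. \<Sum>i\<in>extensions K w. 1)"
    by (rule sum_words_Suc) (use step in auto)
  also have "\<dots> = (\<Sum>w\<in>words K M. K - 1)"
    using card_extensions words_nonempty step by (intro sum.cong) auto
  also have "\<dots> = K * (K - 1) ^ (Suc M - 1)"
    using step by (cases M) auto
  finally show ?case .
qed

lemma norm_sum_extensions_le:
  fixes F :: "nat list \<Rightarrow> nat \<Rightarrow> 'b::real_normed_vector"
  assumes K: "K \<ge> 1" and Ws: "Ws \<subseteq> words K M" and M: "M \<ge> 1" and X: "X \<ge> 0"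
    and F: "\<And>w i. w \<in> Ws \<Longrightarrow> i \<in> extensions K w \<Longrightarrow> norm (F w i) \<le> X"
  shows "norm (\<Sum>w\<in>Ws. \<Sum>i\<in>extensions K w. F w i) \<le> real K * (real K - 1) ^ M * X"
proof -
  have "norm (\<Sum>w\<in>Ws. \<Sum>i\<in>extensions K w. F w i) \<le> (\<Sum>w\<in>Ws. \<Sum>i\<in>extensions K w. X)"
    by (rule order_trans[OF norm_sum sum_mono[OF order_trans[OF norm_sum sum_mono[OF F]]]])
  also have "\<dots> = real (card Ws) * real (K - 1) * X"
    using card_extensions Ws M words_nonempty by (subst sum.cong[OF refl, of _ _ "\<lambda>_. real (K - 1) * X"]) auto
  also have "\<dots> \<le> real (card (words K M)) * real (K - 1) * X"
    using X Ws by (intro mult_right_mono) (auto intro!: card_mono finite_words)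
  also have "\<dots> = real K * (real K - 1) ^ M * X"
    using card_words[OF M] K M by (cases M) (auto simp: of_nat_diff)
  finally show ?thesis .
qed

section \<open>Inversion in a circle\<close>

lemma dist_inv_circ_centre:
  assumes "a \<noteq> c j"
  shows "cmod (inv_circ c R j a - c j) = (R j)\<^sup>2 / cmod (a - c j)"
  using assms
  by (simp add: inv_circ_def norm_divide complex_mod_cnj norm_power del: complex_cnj_diff)

lemma dist_inv_circ_inv_circ:
  assumes "a \<noteq> c j" "b \<noteq> c j"
  shows "cmod (inv_circ c R j a - inv_circ c R j b)
           = (R j)\<^sup>2 * cmod (a - b) / (cmod (a - c j) * cmod (b - c j))"
proof -
  have "inv_circ c R j a - inv_circ c R j b
      = of_real ((R j)\<^sup>2) * (cnj (b - c j) - cnj (a - c j)) / (cnj (a - c j) * cnj (b - c j))"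
    using assms by (simp add: inv_circ_def field_simps)
  then show ?thesis
    by (simp add: norm_mult norm_divide complex_cnj_diff[symmetric] norm_minus_commute
        complex_mod_cnj norm_power del: complex_cnj_diff)
qed

text \<open>For \<open>z\<close> on the circle, \<open>R\<^sup>2 = (z - c) \<cdot> cnj (z - c)\<close>, whence
  \<open>z - T a = (z - c) \<cdot> cnj (a - z) / cnj (a - c)\<close>.\<close>
lemma dist_inv_circ_on_circle:
  assumes z: "cmod (z - c j) = R j" and a: "a \<noteq> c j"
  shows "cmod (z - inv_circ c R j a) = R j * cmod (z - a) / cmod (a - c j)"
proof -
  define u where "u = z - c j"
  define b where "b = a - c j"
  have b0: "b \<noteq> 0" using a by (simp add: b_def)
  have R2: "of_real ((R j)\<^sup>2) = u * cnj u"
    using complex_norm_square[of u] z by (simp add: u_def)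
  have "z - inv_circ c R j a = u - u * cnj u / cnj b"
    unfolding inv_circ_def R2 by (simp add: u_def b_def)
  also have "\<dots> = u * cnj (b - u) / cnj b" using b0 by (simp add: field_simps)
  finally have "cmod (z - inv_circ c R j a) = cmod u * cmod (b - u) / cmod b"
    by (simp add: norm_mult norm_divide complex_mod_cnj complex_cnj_diff[symmetric] del: complex_cnj_diff)
  moreover have "b - u = a - z" by (simp add: b_def u_def)
  ultimately show ?thesis using z by (simp add: u_def b_def norm_minus_commute)
qed

section \<open>Geometry of the circle configuration\<close>

locale circle_configuration =
  fixes K :: nat and c :: "nat \<Rightarrow> complex" and R :: "nat \<Rightarrow> real" and z0 :: complex
  assumes K_ge_2: "K \<ge> 2"
    and R_pos: "\<forall>j\<in>{1..K}. R j > 0"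
    and disks_disjoint:
      "\<forall>i\<in>{1..K}. \<forall>j\<in>{1..K}. i \<noteq> j \<longrightarrow> cball (c i) (R i) \<inter> cball (c j) (R j) = {}"
    and z0_in_D: "z0 \<in> Dfin K c R"
    and small: "(real K - 1) * (Pmax K c R z0)\<^sup>2 < 1"
begin

abbreviation "P \<equiv> Pmax K c R z0"
abbreviation "T \<equiv> inv_circ c R"
abbreviation "pt \<equiv> word_pt c R z0"
abbreviation "W \<equiv> words K"

lemma K_pos: "real K > 0"
  using K_ge_2 by simp

lemma centres_far_apart:
  assumes "i \<in> {1..K}" "j \<in> {1..K}" "i \<noteq> j"
  shows "cmod (c i - c j) > R i + R j"
proof (rule ccontr)
  assume "\<not> ?thesis"
  then have le: "cmod (c i - c j) \<le> R i + R j" by simp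
  have ri: "R i > 0" "R j > 0" using R_pos assms by auto
  define t where "t = R i / (R i + R j)"
  have t: "0 < t" "t < 1" "1 - t = R j / (R i + R j)" using ri by (auto simp: t_def field_simps)
  define p where "p = c i + of_real t * (c j - c i)"
  have "dist (c i) p = t * cmod (c i - c j)"
    using t by (simp add: p_def dist_norm norm_mult norm_minus_commute)
  also have "\<dots> \<le> t * (R i + R j)" using le t by (intro mult_left_mono) auto
  also have "\<dots> = R i" using ri by (simp add: t_def)
  finally have pi: "p \<in> cball (c i) (R i)" by simp
  have "p - c j = of_real (1 - t) * (c i - c j)" by (simp add: p_def algebra_simps)
  then have "dist (c j) p = (1 - t) * cmod (c i - c j)"
    using t(2) by (simp add: dist_norm norm_minus_commute norm_mult del: of_real_diff)
  also have "\<dots> \<le> (1 - t) * (R i + R j)" using le t by (intro mult_left_mono) auto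
  also have "\<dots> = R j" using ri t by simp
  finally have "p \<in> cball (c j) (R j)" by simp
  then show False using pi disks_disjoint assms by blast
qed

lemma Pj_le_Pmax: "j \<in> {1..K} \<Longrightarrow> Pj K c R z0 j \<le> P"
  unfolding Pmax_def by (rule Max_ge) auto

lemma Pmax_ge:
  assumes j: "j \<in> {1..K}"
  shows Pmax_ge_z0: "R j / cmod (z0 - c j) \<le> P"
    and Pmax_ge_centre: "l \<in> {1..K} \<Longrightarrow> l \<noteq> j \<Longrightarrow> R j / (cmod (c j - c l) - R l) \<le> P"
proof -
  let ?S = "{R j / cmod (z0 - c j)} \<union> {R j / (cmod (c j - c l) - R l) | l. l \<in> {1..K} \<and> l \<noteq> j}"
  have "finite ?S" by auto
  then have "x \<le> P" if "x \<in> ?S" for x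
    using Max_ge[OF _ that] Pj_le_Pmax[OF j] unfolding Pj_def by linarith
  then show "R j / cmod (z0 - c j) \<le> P" "l \<in> {1..K} \<Longrightarrow> l \<noteq> j \<Longrightarrow> R j / (cmod (c j - c l) - R l) \<le> P"
    by blast+
qed

lemma Pmax_pos: "P > 0"
proof -
  have one: "1 \<in> {1..K}" using K_ge_2 by auto
  then have "cmod (z0 - c 1) > R 1" "R 1 > 0" using z0_in_D R_pos by (auto simp: Dfin_def)
  then show ?thesis using Pmax_ge_z0[OF one] by (smt (verit) divide_pos_pos)
qed

lemma Pmax_less_1: "P < 1"
proof -
  have "P\<^sup>2 \<le> (real K - 1) * P\<^sup>2" using K_ge_2 by (simp add: mult_le_cancel_right1)
  then have "P\<^sup>2 < 1" using small by linarith
  then show ?thesis using Pmax_pos by (smt (verit) one_le_power)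
qed

lemma R_mult_Pmax_le: "l \<in> {1..K} \<Longrightarrow> R l * P \<le> R l"
  using R_pos Pmax_less_1 by (simp add: mult_le_cancel_left1)

definition rate :: real where
  "rate = (real K - 1) * P\<^sup>2"

lemma rate_nonneg: "0 \<le> rate" and rate_less_1: "rate < 1"
  using small K_ge_2 by (auto simp: rate_def)

text \<open>The points to which \<open>T\<^sub>j\<close> is applied along admissible words: \<open>z\<^sub>0\<close> and the closed disks
  other than the \<open>j\<close>-th.\<close>
definition source :: "nat \<Rightarrow> complex set" where
  "source j = {a. a = z0 \<or> (\<exists>l\<in>{1..K}. l \<noteq> j \<and> cmod (a - c l) \<le> R l)}"

lemma z0_source: "z0 \<in> source j"
  by (simp add: source_def)

lemma disk_source:
  "l \<in> {1..K} \<Longrightarrow> l \<noteq> j \<Longrightarrow> cmod (a - c l) \<le> R l * P \<Longrightarrow> a \<in> source j"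
proof -
  assume "l \<in> {1..K}" "l \<noteq> j" "cmod (a - c l) \<le> R l * P"
  moreover from this have "cmod (a - c l) \<le> R l" using R_mult_Pmax_le by (meson order_trans)
  ultimately show ?thesis by (auto simp: source_def)
qed

lemma source_dist_centre:
  assumes j: "j \<in> {1..K}" and a: "a \<in> source j"
  shows "R j \<le> P * cmod (a - c j)" "cmod (a - c j) > R j"
proof -
  have Rj: "R j > 0" using R_pos j by auto
  have "R j \<le> P * cmod (a - c j) \<and> cmod (a - c j) > R j"
  proof (cases "a = z0")
    case True
    have d: "cmod (z0 - c j) > R j" using z0_in_D j by (auto simp: Dfin_def)
    moreover have "cmod (z0 - c j) > 0" using d Rj by linarith
    ultimately show ?thesis
      using True Pmax_ge_z0[OF j] by (auto simp: pos_divide_le_eq mult.commute)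
  next
    case False
    then obtain l where l: "l \<in> {1..K}" "l \<noteq> j" "cmod (a - c l) \<le> R l"
      using a by (auto simp: source_def)
    have sep: "cmod (c j - c l) > R j + R l" using centres_far_apart[OF j l(1)] l(2) by auto
    have "cmod (c j - c l) \<le> cmod (a - c j) + cmod (a - c l)"
      using norm_triangle_ineq4[of "a - c l" "a - c j"] by (simp add: norm_minus_commute algebra_simps)
    then have ge: "cmod (a - c j) \<ge> cmod (c j - c l) - R l" using l(3) by linarith
    have "R j \<le> P * (cmod (c j - c l) - R l)"
      using Pmax_ge_centre[OF j l(1,2)] sep Rj by (auto simp: field_simps)
    also have "\<dots> \<le> P * cmod (a - c j)" using ge Pmax_pos by (intro mult_left_mono) auto
    finally show ?thesis using ge sep by auto
  qed
  then show "R j \<le> P * cmod (a - c j)" "cmod (a - c j) > R j" by auto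
qed

lemma ratio_source_le_Pmax:
  assumes "j \<in> {1..K}" "a \<in> source j"
  shows "R j / cmod (a - c j) \<le> P" "R j / cmod (a - c j) \<ge> 0"
proof -
  have "R j > 0" using R_pos assms(1) by blast
  then have "cmod (a - c j) > 0" using source_dist_centre(2)[OF assms] by linarith
  then show "R j / cmod (a - c j) \<le> P" "R j / cmod (a - c j) \<ge> 0"
    using source_dist_centre(1)[OF assms] \<open>R j > 0\<close> by (auto simp: pos_divide_le_eq mult.commute)
qed

lemma inv_circ_source_near_centre:
  assumes j: "j \<in> {1..K}" and a: "a \<in> source j"
  shows "cmod (T j a - c j) \<le> R j * P"
proof -
  have "R j > 0" using R_pos j by blast
  then have "a \<noteq> c j" using source_dist_centre(2)[OF assms] by auto
  then have "cmod (T j a - c j) = R j * (R j / cmod (a - c j))"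
    by (simp add: dist_inv_circ_centre power2_eq_square)
  also have "\<dots> \<le> R j * P"
    using ratio_source_le_Pmax[OF assms] \<open>R j > 0\<close> by (intro mult_left_mono) auto
  finally show ?thesis .
qed

lemma inv_circ_source_contraction:
  assumes j: "j \<in> {1..K}" and a: "a \<in> source j" and b: "b \<in> source j"
  shows "cmod (T j a - T j b) \<le> P\<^sup>2 * cmod (a - b)"
proof -
  have "R j > 0" using R_pos j by auto
  then have "a \<noteq> c j" "b \<noteq> c j" using source_dist_centre(2) j a b by fastforce+
  then have "cmod (T j a - T j b) = (R j / cmod (a - c j)) * (R j / cmod (b - c j)) * cmod (a - b)"
    by (simp add: dist_inv_circ_inv_circ power2_eq_square)
  also have "\<dots> \<le> P * P * cmod (a - b)"
    using ratio_source_le_Pmax[OF j a] ratio_source_le_Pmax[OF j b]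
    by (intro mult_right_mono mult_mono) auto
  finally show ?thesis by (simp add: power2_eq_square)
qed

lemma foldr_inv_circ_near_contraction:
  assumes "w \<in> W M" "w \<noteq> []" "a \<in> source (last w)" "b \<in> source (last w)"
  shows "cmod (foldr T w a - c (hd w)) \<le> R (hd w) * P
     \<and> cmod (foldr T w a - foldr T w b) \<le> P ^ (2 * length w) * cmod (a - b)"
  using assms
proof (induction w arbitrary: M a b)
  case Nil
  then show ?case by simp
next
  case (Cons i v)
  then obtain M' where M': "M = Suc M'" by (cases M) (auto simp: words_def)
  have iv: "i \<in> {1..K}" "v \<in> W M'" "v \<noteq> [] \<longrightarrow> hd v \<noteq> i"
    using Cons.prems(1) M' Cons_words_iff by auto
  show ?case
  proof (cases "v = []")
    case True
    then have "a \<in> source i" "b \<in> source i" using Cons.prems by auto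
    then show ?thesis
      using inv_circ_source_near_centre[OF iv(1)] inv_circ_source_contraction[OF iv(1)] True by simp
  next
    case False
    have ab: "a \<in> source (last v)" "b \<in> source (last v)" using Cons.prems False by auto
    note IH = Cons.IH[OF iv(2) False ab] Cons.IH[OF iv(2) False ab(2) ab(2)]
    have hv: "hd v \<in> {1..K}" "hd v \<noteq> i" using hd_words[OF iv(2) False] iv(3) False by auto
    then have "foldr T v a \<in> source i" "foldr T v b \<in> source i"
      using IH disk_source by blast+
    note step = inv_circ_source_near_centre[OF iv(1) this(1)] inv_circ_source_contraction[OF iv(1) this]
    have "cmod (foldr T (i # v) a - foldr T (i # v) b) \<le> P\<^sup>2 * cmod (foldr T v a - foldr T v b)"
      using step(2) by simp
    also have "\<dots> \<le> P\<^sup>2 * (P ^ (2 * length v) * cmod (a - b))"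
      using IH(1) by (intro mult_left_mono) auto
    also have "\<dots> = P ^ (2 * length (i # v)) * cmod (a - b)"
      by (simp add: power_add power_mult power2_eq_square)
    finally show ?thesis using step(1) by simp
  qed
qed

lemma word_pt_near_centre:
  assumes "w \<in> W M" "w \<noteq> []"
  shows "cmod (pt w - c (hd w)) \<le> R (hd w) * P"
  using foldr_inv_circ_near_contraction[OF assms z0_source z0_source] by (simp add: word_pt_def)

text \<open>A uniform bound for the first step of any orbit; the word points of \<open>w\<close> and \<open>w i\<close> are the
  images under the composite of \<open>w\<close> of \<open>z\<^sub>0\<close> and \<open>T\<^sub>i z\<^sub>0\<close>.\<close>
definition jump :: real where
  "jump = (\<Sum>i\<in>{1..K}. cmod (z0 - T i z0))"

lemma jump_nonneg: "jump \<ge> 0"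
  by (simp add: jump_def sum_nonneg)

lemma dist_word_pt_snoc:
  assumes w: "w \<in> W M" "w \<noteq> []" and i: "i \<in> {1..K}" "i \<noteq> last w"
  shows "cmod (pt w - pt (w @ [i])) \<le> P ^ (2 * M) * jump"
proof -
  have "T i z0 \<in> source (last w)"
    using inv_circ_source_near_centre[OF i(1) z0_source] disk_source[OF i(1)] i(2) by metis
  then have "cmod (foldr T w z0 - foldr T w (T i z0)) \<le> P ^ (2 * M) * cmod (z0 - T i z0)"
    using foldr_inv_circ_near_contraction[OF w z0_source] length_words[OF w(1)] by blast
  also have "\<dots> \<le> P ^ (2 * M) * jump"
    unfolding jump_def using i Pmax_pos by (intro mult_left_mono member_le_sum) auto
  finally show ?thesis by (simp add: word_pt_def)
qed

text \<open>The disk \<open>|z - c\<^sub>l| \<le> R\<^sub>l P\<close> contains every word point starting with \<open>l\<close>.\<close>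
definition margin :: "real \<Rightarrow> complex \<Rightarrow> bool" where
  "margin d z \<longleftrightarrow> d > 0 \<and> (\<forall>l\<in>{1..K}. cmod (z - c l) \<ge> R l * P + d)"

lemma margin_dist_word_pt:
  assumes "margin d z" "w \<in> W M" "w \<noteq> []"
  shows "cmod (z - pt w) \<ge> d"
proof -
  have "cmod (z - c (hd w)) \<le> cmod (z - pt w) + cmod (pt w - c (hd w))"
    using norm_triangle_ineq[of "z - pt w" "pt w - c (hd w)"] by simp
  then show ?thesis
    using word_pt_near_centre[OF assms(2,3)] assms hd_words[OF assms(2,3)]
    unfolding margin_def by fastforce
qed

lemma margin_compact:
  assumes A: "compact A" and gt: "\<And>z l. z \<in> A \<Longrightarrow> l \<in> {1..K} \<Longrightarrow> cmod (z - c l) > R l * P"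
  shows "\<exists>d. \<forall>z\<in>A. margin d z"
proof (cases "A = {}")
  case True then show ?thesis by auto
next
  case False
  have "\<exists>e>0. \<forall>z\<in>A. cmod (z - c l) \<ge> R l * P + e" if l: "l \<in> {1..K}" for l
  proof -
    have "continuous_on A (\<lambda>z. cmod (z - c l))" by (intro continuous_intros)
    then obtain x where "x \<in> A" "\<forall>y\<in>A. cmod (x - c l) \<le> cmod (y - c l)"
      using continuous_attains_inf[OF A False] by blast
    then show ?thesis using gt[OF _ l] by (intro exI[of _ "cmod (x - c l) - R l * P"]) auto
  qed
  then obtain e where e: "\<forall>l\<in>{1..K}. e l > 0 \<and> (\<forall>z\<in>A. cmod (z - c l) \<ge> R l * P + e l)"
    by metis
  define d where "d = Min (e ` {1..K})"
  have "{1..K} \<noteq> {}" using K_ge_2 by auto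
  then have "d > 0" "\<forall>l\<in>{1..K}. d \<le> e l"
    using e unfolding d_def by auto
  then show ?thesis
    using e unfolding margin_def by (intro exI[of _ d]) fastforce
qed

lemma open_Dfin: "open (Dfin K c R)"
proof -
  have "Dfin K c R = (\<Inter>j\<in>{1..K}. {z. R j < cmod (z - c j)})" by (auto simp: Dfin_def)
  then show ?thesis by (auto intro!: open_Collect_less continuous_intros)
qed

lemma Dfin_dist_centre_gt: "z \<in> Dfin K c R \<Longrightarrow> l \<in> {1..K} \<Longrightarrow> cmod (z - c l) > R l * P"
  using R_mult_Pmax_le unfolding Dfin_def by fastforce

lemma margin_compact_Dfin: "compact A \<Longrightarrow> A \<subseteq> Dfin K c R \<Longrightarrow> \<exists>d. \<forall>z\<in>A. margin d z"
  using margin_compact Dfin_dist_centre_gt by blast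

lemma margin_Dfin: "z \<in> Dfin K c R \<Longrightarrow> \<exists>d. margin d z"
  using margin_compact_Dfin[of "{z}"] by auto

lemma margin_circle:
  assumes j: "j \<in> {1..K}"
  shows "\<exists>d. \<forall>z\<in>sphere (c j) (R j). margin d z"
proof (rule margin_compact)
  fix z l assume z: "z \<in> sphere (c j) (R j)" and l: "l \<in> {1..K}"
  then have zj: "cmod (z - c j) = R j" by (simp add: dist_norm norm_minus_commute)
  show "cmod (z - c l) > R l * P"
  proof (cases "l = j")
    case True
    then show ?thesis using zj R_pos j Pmax_less_1 by simp
  next
    case False
    have "cmod (c j - c l) \<le> cmod (z - c j) + cmod (z - c l)"
      using norm_triangle_ineq4[of "z - c l" "z - c j"] by (simp add: norm_minus_commute algebra_simps)
    then show ?thesis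
      using centres_far_apart[OF j l] False zj R_mult_Pmax_le[OF l] by linarith
  qed
qed simp

section \<open>The alternating sum as a telescoping series\<close>

definition level_sum :: "nat \<Rightarrow> complex \<Rightarrow> real" where
  "level_sum M z = (\<Sum>w\<in>W M. ln (cmod (z - pt w)))"

definition layer_diff :: "nat list set \<Rightarrow> complex \<Rightarrow> real" where
  "layer_diff Ws z =
     (\<Sum>w\<in>Ws. \<Sum>i\<in>extensions K w. ln (cmod (z - pt w)) - ln (cmod (z - pt (w @ [i]))))"

lemma level_sum_0: "level_sum 0 z = ln (cmod (z - z0))"
  by (simp add: level_sum_def words_0 word_pt_def)

lemma layer_diff_eq:
  assumes M: "M \<ge> 1" and Q: "\<And>w i. w \<noteq> [] \<Longrightarrow> Q (w @ [i]) = Q w"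
  shows "layer_diff {w\<in>W M. Q w} z = (real K - 1) * (\<Sum>w\<in>{w\<in>W M. Q w}. ln (cmod (z - pt w)))
      - (\<Sum>u\<in>{u\<in>W (Suc M). Q u}. ln (cmod (z - pt u)))"
proof -
  have "(\<Sum>w\<in>{w\<in>W M. Q w}. \<Sum>i\<in>extensions K w. ln (cmod (z - pt w)))
      = (\<Sum>w\<in>{w\<in>W M. Q w}. (real K - 1) * ln (cmod (z - pt w)))"
    using card_extensions words_nonempty M K_ge_2 by (intro sum.cong) (auto simp: of_nat_diff)
  moreover have "(\<Sum>w\<in>{w\<in>W M. Q w}. \<Sum>i\<in>extensions K w. ln (cmod (z - pt (w @ [i]))))
      = (\<Sum>u\<in>{u\<in>W (Suc M). Q u}. ln (cmod (z - pt u)))"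
    by (rule sum_words_Suc[symmetric, OF M Q])
  ultimately show ?thesis by (simp add: layer_diff_def sum_subtractf sum_distrib_left)
qed

lemma layer_diff_words: "M \<ge> 1 \<Longrightarrow> layer_diff (W M) z = (real K - 1) * level_sum M z - level_sum (Suc M) z"
  using layer_diff_eq[of M "\<lambda>_. True" z] by (simp add: level_sum_def)

lemma abs_layer_diff_le:
  assumes z: "margin d z" and Ws: "Ws \<subseteq> W M" and M: "M \<ge> 1"
  shows "\<bar>layer_diff Ws z\<bar> \<le> real K * (jump / d) * rate ^ M"
proof -
  have d: "d > 0" using z by (simp add: margin_def)
  have "\<bar>layer_diff Ws z\<bar> \<le> real K * (real K - 1) ^ M * (jump / d * (P\<^sup>2) ^ M)"
    unfolding layer_diff_def real_norm_def[symmetric]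
  proof (rule norm_sum_extensions_le[OF _ Ws M])
    fix w i assume "w \<in> Ws" "i \<in> extensions K w"
    then have w: "w \<in> W M" "w \<noteq> []" and i: "i \<in> {1..K}" "i \<noteq> last w"
      using Ws M words_nonempty by (auto simp: extensions_def)
    have "w @ [i] \<in> W (Suc M)" using snoc_words_iff w i by auto
    then have "\<bar>ln (cmod (z - pt w)) - ln (cmod (z - pt (w @ [i])))\<bar> \<le> cmod (pt w - pt (w @ [i])) / d"
      using margin_dist_word_pt[OF z] w d by (intro abs_ln_norm_diff_le) auto
    also have "\<dots> \<le> P ^ (2 * M) * jump / d"
      using dist_word_pt_snoc[OF w i] d by (simp add: divide_right_mono)
    also have "\<dots> = jump / d * (P\<^sup>2) ^ M"
      by (simp add: power_mult)
    finally show "norm (ln (cmod (z - pt w)) - ln (cmod (z - pt (w @ [i])))) \<le> jump / d * (P\<^sup>2) ^ M"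
      by simp
  qed (use K_ge_2 jump_nonneg d in auto)
  also have "\<dots> = real K * (jump / d) * rate ^ M" by (simp add: rate_def power_mult_distrib)
  finally show ?thesis .
qed

definition h_step :: "nat \<Rightarrow> complex \<Rightarrow> real" where
  "h_step m z = (-1) ^ m * layer_diff (W (Suc m)) z / (2 * pi * K)"

definition h_approx :: "nat \<Rightarrow> complex \<Rightarrow> real" where
  "h_approx N z = level_sum 1 z / (2 * pi * K) + (\<Sum>m<N. h_step m z)"

lemma alternating_level_sums_eq:
  "(real K - 1) * (\<Sum>M\<le>N. (-1) ^ M * level_sum M z) + (\<Sum>M\<le>Suc N. (-1) ^ M * level_sum M z)
   = real K * level_sum 0 z - level_sum 1 z - (\<Sum>m<N. (-1) ^ m * layer_diff (W (Suc m)) z)"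
proof (induction N)
  case 0
  then show ?case by (simp add: algebra_simps)
next
  case (Suc N)
  have "(real K - 1) * (\<Sum>M\<le>Suc N. (-1) ^ M * level_sum M z) + (\<Sum>M\<le>Suc (Suc N). (-1) ^ M * level_sum M z)
      = (real K - 1) * (\<Sum>M\<le>N. (-1) ^ M * level_sum M z) + (\<Sum>M\<le>Suc N. (-1) ^ M * level_sum M z)
        - (-1) ^ N * ((real K - 1) * level_sum (Suc N) z - level_sum (Suc (Suc N)) z)"
    by (simp add: algebra_simps)
  then show ?case
    using Suc.IH layer_diff_words[of "Suc N" z] by simp
qed

lemma psi_s_star_level_sums:
  "psi_s_star K c R z0 N z = - ((real K - 1) * (\<Sum>M\<le>N. (-1) ^ M * level_sum M z)
      + (\<Sum>M\<le>Suc N. (-1) ^ M * level_sum M z)) / (2 * pi * K)"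
  using K_pos by (simp add: psi_s_star_def psi_s_def level_sum_def field_simps)

lemma psi_s_star_eq_h_approx:
  "psi_s_star K c R z0 N z = h_approx N z - ln (cmod (z - z0)) / (2 * pi)"
  unfolding psi_s_star_level_sums alternating_level_sums_eq level_sum_0 h_approx_def h_step_def
    sum_divide_distrib[symmetric]
  using K_pos by (simp add: field_simps)

lemma abs_h_step_le:
  assumes "margin d z"
  shows "\<bar>h_step m z\<bar> \<le> jump * rate / (2 * pi * d) * rate ^ m"
proof -
  have "\<bar>layer_diff (W (Suc m)) z\<bar> \<le> real K * (jump / d) * rate ^ Suc m"
    by (rule abs_layer_diff_le[OF assms]) auto
  then show ?thesis
    using K_pos by (simp add: h_step_def abs_mult abs_divide field_simps)
qed

lemma uniformly_convergent_h_approx: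
  assumes "\<forall>z\<in>A. margin d z"
  shows "uniformly_convergent_on A h_approx"
proof -
  have "uniformly_convergent_on A (\<lambda>N z. \<Sum>m<N. h_step m z)"
    using assms abs_h_step_le rate_nonneg rate_less_1
    by (intro Weierstrass_m_test') (auto intro!: summable_mult summable_geometric)
  then show ?thesis
    unfolding h_approx_def[abs_def] by (intro uniformly_convergent_add uniformly_convergent_on_const)
qed

lemma convergent_h_approx: "margin d z \<Longrightarrow> convergent (\<lambda>N. h_approx N z)"
  using uniformly_convergent_h_approx[of "{z}"] by (simp add: uniformly_convergent_on_singleton)

section \<open>Holomorphic lifts near a point\<close>

definition layer_diff_Ln :: "complex \<Rightarrow> nat list set \<Rightarrow> complex \<Rightarrow> complex" where
  "layer_diff_Ln a Ws z =
     (\<Sum>w\<in>Ws. \<Sum>i\<in>extensions K w. Ln_rel a (pt w) z - Ln_rel a (pt (w @ [i])) z)"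

definition h_step_Ln :: "complex \<Rightarrow> nat \<Rightarrow> complex \<Rightarrow> complex" where
  "h_step_Ln a m z = of_real ((-1) ^ m / (2 * pi * K)) * layer_diff_Ln a (W (Suc m)) z"

definition h_approx_Ln :: "complex \<Rightarrow> nat \<Rightarrow> complex \<Rightarrow> complex" where
  "h_approx_Ln a N z =
     of_real (1 / (2 * pi * K)) * (\<Sum>w\<in>W 1. Ln_rel a (pt w) z) + (\<Sum>m<N. h_step_Ln a m z)"

lemma margin_ball_word_pt:
  assumes a: "margin d a" and z: "z \<in> ball a (d / 2)" and w: "w \<in> W M" "w \<noteq> []"
  shows "cmod (a - pt w) \<ge> d" "z \<noteq> pt w" "a \<noteq> pt w"
proof -
  show ad: "cmod (a - pt w) \<ge> d" by (rule margin_dist_word_pt[OF a w])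
  have "cmod (a - pt w) \<le> cmod (a - z) + cmod (z - pt w)"
    using norm_triangle_ineq[of "a - z" "z - pt w"] by simp
  then show "z \<noteq> pt w" "a \<noteq> pt w"
    using ad z a by (auto simp: margin_def dist_norm)
qed

lemma Re_Ln_rel_word_pt:
  assumes "margin d a" "z \<in> ball a (d / 2)" "w \<in> W M" "w \<noteq> []"
  shows "Re (Ln_rel a (pt w) z) = ln (cmod (z - pt w)) - ln (cmod (a - pt w))"
  using margin_ball_word_pt[OF assms] by (intro Re_Ln_rel) auto

lemma Re_h_approx_Ln:
  assumes a: "margin d a" and z: "z \<in> ball a (d / 2)"
  shows "Re (h_approx_Ln a N z) = h_approx N z - h_approx N a"
proof -
  have "Re (layer_diff_Ln a (W M) z) = layer_diff (W M) z - layer_diff (W M) a" if M: "M \<ge> 1" for M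
    unfolding layer_diff_Ln_def layer_diff_def Re_sum sum_subtractf[symmetric]
  proof (intro sum.cong refl)
    fix w i assume "w \<in> W M" "i \<in> extensions K w"
    then have "w \<in> W M" "w \<noteq> []" "w @ [i] \<in> W (Suc M)" "w @ [i] \<noteq> []"
      using snoc_extension_words words_nonempty M by auto
    then show "Re (Ln_rel a (pt w) z - Ln_rel a (pt (w @ [i])) z) =
        ln (cmod (z - pt w)) - ln (cmod (z - pt (w @ [i]))) -
        (ln (cmod (a - pt w)) - ln (cmod (a - pt (w @ [i]))))"
      using Re_Ln_rel_word_pt[OF a z] by simp
  qed
  then have "Re (h_step_Ln a m z) = h_step m z - h_step m a" for m
    by (simp add: h_step_Ln_def h_step_def diff_divide_distrib right_diff_distrib)
  moreover have "Re (\<Sum>w\<in>W 1. Ln_rel a (pt w) z) = level_sum 1 z - level_sum 1 a"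
    unfolding Re_sum level_sum_def sum_subtractf[symmetric]
    using Re_Ln_rel_word_pt[OF a z] words_nonempty by (intro sum.cong) auto
  ultimately show ?thesis
    by (simp add: h_approx_Ln_def h_approx_def Re_sum sum_subtractf diff_divide_distrib)
qed

lemma holomorphic_on_h_approx_Ln:
  assumes a: "margin d a"
  shows "h_approx_Ln a N holomorphic_on ball a (d / 2)"
proof -
  have d: "d > 0" using a by (simp add: margin_def)
  have Ln: "Ln_rel a (pt w) holomorphic_on ball a (d / 2)" if "w \<in> W M" "w \<noteq> []" for w M
    using holomorphic_on_Ln_rel[OF margin_dist_word_pt[OF a that] d] .
  have "(\<lambda>z. layer_diff_Ln a (W M) z) holomorphic_on ball a (d / 2)" if M: "M \<ge> 1" for M
    unfolding layer_diff_Ln_def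
  proof (intro holomorphic_on_sum holomorphic_on_diff)
    fix w i assume "w \<in> W M" "i \<in> extensions K w"
    then show "Ln_rel a (pt w) holomorphic_on ball a (d / 2)"
      "Ln_rel a (pt (w @ [i])) holomorphic_on ball a (d / 2)"
      using Ln[of w M] Ln[of "w @ [i]" "Suc M"] snoc_extension_words words_nonempty M by auto
  qed
  then have steps: "(\<lambda>z. h_step_Ln a m z) holomorphic_on ball a (d / 2)" for m
    unfolding h_step_Ln_def by (intro holomorphic_intros) auto
  have first: "(\<lambda>z. \<Sum>w\<in>W 1. Ln_rel a (pt w) z) holomorphic_on ball a (d / 2)"
  proof (intro holomorphic_on_sum)
    fix w assume "w \<in> W 1"
    then show "Ln_rel a (pt w) holomorphic_on ball a (d / 2)"
      using Ln[of w 1] words_nonempty by auto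
  qed
  show ?thesis
    unfolding h_approx_Ln_def[abs_def]
    by (intro holomorphic_on_add holomorphic_on_mult[OF holomorphic_on_const first]
        holomorphic_on_sum[OF steps])
qed

lemma norm_layer_diff_Ln_le:
  assumes a: "margin d a" and z: "z \<in> ball a (d / 2)" and M: "M \<ge> 1"
  shows "norm (layer_diff_Ln a (W M) z) \<le> real K * (jump / d) * rate ^ M"
proof -
  have d: "d > 0" using a by (simp add: margin_def)
  have "norm (layer_diff_Ln a (W M) z) \<le> real K * (real K - 1) ^ M * (jump / d * (P\<^sup>2) ^ M)"
    unfolding layer_diff_Ln_def
  proof (rule norm_sum_extensions_le[OF _ order.refl M])
    fix w i assume "w \<in> W M" "i \<in> extensions K w"
    then have w: "w \<in> W M" "w \<noteq> []" and i: "i \<in> {1..K}" "i \<noteq> last w"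
      and wi: "w @ [i] \<in> W (Suc M)" "w @ [i] \<noteq> []"
      using words_nonempty snoc_extension_words M by (auto simp: extensions_def)
    have "norm (Ln_rel a (pt w) z - Ln_rel a (pt (w @ [i])) z) \<le> cmod (pt w - pt (w @ [i])) / d"
      using margin_dist_word_pt[OF a] w wi d z by (intro norm_Ln_rel_diff_le) auto
    also have "\<dots> \<le> P ^ (2 * M) * jump / d"
      using dist_word_pt_snoc[OF w i] d by (simp add: divide_right_mono)
    also have "\<dots> = jump / d * (P\<^sup>2) ^ M"
      by (simp add: power_mult)
    finally show "norm (Ln_rel a (pt w) z - Ln_rel a (pt (w @ [i])) z) \<le> jump / d * (P\<^sup>2) ^ M" .
  qed (use K_ge_2 jump_nonneg d in auto)
  also have "\<dots> = real K * (jump / d) * rate ^ M"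
    by (simp add: rate_def power_mult_distrib)
  finally show ?thesis .
qed

lemma norm_h_step_Ln_le:
  assumes "margin d a" "z \<in> ball a (d / 2)"
  shows "norm (h_step_Ln a m z) \<le> jump * rate / (2 * pi * d) * rate ^ m"
  using norm_layer_diff_Ln_le[OF assms, of "Suc m"] K_pos
  by (simp add: h_step_Ln_def norm_mult norm_divide norm_power field_simps)

lemma h_approx_Ln_holomorphic_limit:
  assumes a: "margin d a"
  shows "\<exists>g. g holomorphic_on ball a (d / 4) \<and>
           (\<forall>z\<in>ball a (d / 4). (\<lambda>N. h_approx_Ln a N z) \<longlonglongrightarrow> g z)"
proof -
  have "cball a (d / 4) \<subseteq> ball a (d / 2)"
    using a by (subst cball_subset_ball_iff) (simp add: margin_def)
  then have sub: "ball a (d / 4) \<subseteq> cball a (d / 4)" "cball a (d / 4) \<subseteq> ball a (d / 2)"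
    by auto
  have "uniformly_convergent_on (ball a (d / 2)) (\<lambda>N z. \<Sum>m<N. h_step_Ln a m z)"
    using norm_h_step_Ln_le[OF a] rate_nonneg rate_less_1
    by (intro Weierstrass_m_test') (auto intro!: summable_mult summable_geometric)
  then have "uniformly_convergent_on (ball a (d / 2)) (h_approx_Ln a)"
    unfolding h_approx_Ln_def[abs_def] by (intro uniformly_convergent_add uniformly_convergent_on_const)
  then obtain g where g: "uniform_limit (cball a (d / 4)) (h_approx_Ln a) g sequentially"
    using uniformly_convergent_on_subset[OF _ sub(2)] by (auto simp: uniformly_convergent_on_def)
  have "g holomorphic_on ball a (d / 4)"
  proof (rule holomorphic_uniform_limit[OF _ g trivial_limit_sequentially])
    have "continuous_on (cball a (d / 4)) (h_approx_Ln a n) \<and> h_approx_Ln a n holomorphic_on ball a (d / 4)" for n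
      using holomorphic_on_h_approx_Ln[OF a] sub
      by (meson holomorphic_on_imp_continuous_on continuous_on_subset holomorphic_on_subset subset_trans)
    then show "\<forall>\<^sub>F n in sequentially. continuous_on (cball a (d / 4)) (h_approx_Ln a n)
        \<and> h_approx_Ln a n holomorphic_on ball a (d / 4)" by simp
  qed
  moreover have "\<forall>z\<in>ball a (d / 4). (\<lambda>N. h_approx_Ln a N z) \<longlonglongrightarrow> g z"
    using tendsto_uniform_limitI[OF g] sub(1) by blast
  ultimately show ?thesis by blast
qed

lemma h_approx_local_limit:
  assumes a: "margin d a"
  shows "\<exists>g. g holomorphic_on ball a (d / 4) \<and>
           (\<forall>z\<in>ball a (d / 4). (\<lambda>N. h_approx N z) \<longlonglongrightarrow> Re (g z))"
proof -
  obtain g where g: "g holomorphic_on ball a (d / 4)"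
    "\<forall>z\<in>ball a (d / 4). (\<lambda>N. h_approx_Ln a N z) \<longlonglongrightarrow> g z"
    using h_approx_Ln_holomorphic_limit[OF a] by blast
  obtain L where L: "(\<lambda>N. h_approx N a) \<longlonglongrightarrow> L"
    using convergent_h_approx[OF a] by (auto simp: convergent_def)
  have "(\<lambda>N. h_approx N z) \<longlonglongrightarrow> Re (g z + of_real L)" if z: "z \<in> ball a (d / 4)" for z
  proof -
    have "(\<lambda>N. Re (h_approx_Ln a N z) + h_approx N a) \<longlonglongrightarrow> Re (g z) + L"
      using g(2) z by (intro tendsto_add tendsto_Re L) auto
    moreover have "z \<in> ball a (d / 2)" using z a by (auto simp: margin_def)
    then have "Re (h_approx_Ln a N z) + h_approx N a = h_approx N z" for N
      using Re_h_approx_Ln[OF a] by simp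
    ultimately show ?thesis by simp
  qed
  moreover have "(\<lambda>z. g z + of_real L) holomorphic_on ball a (d / 4)"
    using g(1) by (intro holomorphic_intros)
  ultimately show ?thesis by blast
qed

section \<open>The limit on the circles\<close>

definition words_from :: "nat \<Rightarrow> nat \<Rightarrow> nat list set" where
  "words_from j M = {w\<in>W M. w \<noteq> [] \<and> hd w = j}"

definition words_avoiding :: "nat \<Rightarrow> nat \<Rightarrow> nat list set" where
  "words_avoiding j M = {w\<in>W M. w = [] \<or> hd w \<noteq> j}"

definition sum_avoiding :: "nat \<Rightarrow> nat \<Rightarrow> complex \<Rightarrow> real" where
  "sum_avoiding j M z = (\<Sum>w\<in>words_avoiding j M. ln (cmod (z - pt w)))"

text \<open>The constant produced by the reflection identity for the words \<open>j w\<close> of length \<open>M + 1\<close>.\<close>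
definition reflection_const :: "nat \<Rightarrow> nat \<Rightarrow> real" where
  "reflection_const j M = (\<Sum>w\<in>words_avoiding j M. ln (R j) - ln (cmod (pt w - c j)))"

definition circle_const :: "nat \<Rightarrow> nat \<Rightarrow> real" where
  "circle_const j N = - ((real K - 1) * (\<Sum>m<N. (-1) ^ Suc m * reflection_const j m)
      + (\<Sum>m<Suc N. (-1) ^ Suc m * reflection_const j m)) / (2 * pi * K)"

definition circle_error :: "nat \<Rightarrow> nat \<Rightarrow> complex \<Rightarrow> real" where
  "circle_error j N z = - ((-1) ^ N * layer_diff (words_avoiding j N) z) / (2 * pi * K)"

lemma word_pt_avoiding_source:
  assumes j: "j \<in> {1..K}" and w: "w \<in> words_avoiding j M"
  shows "pt w \<in> source j"
proof (cases "w = []")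
  case True then show ?thesis by (simp add: word_pt_def z0_source)
next
  case False
  then have "w \<in> W M" "hd w \<noteq> j" using w by (auto simp: words_avoiding_def)
  then show ?thesis
    using disk_source[OF hd_words] word_pt_near_centre False by blast
qed

lemma level_sum_split:
  "level_sum M z = (\<Sum>w\<in>words_from j M. ln (cmod (z - pt w))) + sum_avoiding j M z"
proof -
  have "W M = words_from j M \<union> words_avoiding j M" "words_from j M \<inter> words_avoiding j M = {}"
    by (auto simp: words_from_def words_avoiding_def)
  moreover have "finite (words_from j M)" "finite (words_avoiding j M)"
    by (auto simp: words_from_def words_avoiding_def intro: finite_subset[OF _ finite_words])
  ultimately show ?thesis
    unfolding level_sum_def sum_avoiding_def by (metis sum.union_disjoint)
qed

lemma words_from_Suc:
  assumes "j \<in> {1..K}"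
  shows "words_from j (Suc M) = (\<lambda>w. j # w) ` words_avoiding j M"
proof
  show "words_from j (Suc M) \<subseteq> (\<lambda>w. j # w) ` words_avoiding j M"
  proof
    fix u assume "u \<in> words_from j (Suc M)"
    then have u: "u \<in> W (Suc M)" "u = j # tl u"
      by (auto simp: words_from_def intro: list.collapse[symmetric])
    then have "tl u \<in> words_avoiding j M"
      using Cons_words_iff[of j "tl u"] by (auto simp: words_avoiding_def)
    then show "u \<in> (\<lambda>w. j # w) ` words_avoiding j M" using u(2) by blast
  qed
  show "(\<lambda>w. j # w) ` words_avoiding j M \<subseteq> words_from j (Suc M)"
    using assms by (auto simp: words_avoiding_def words_from_def Cons_words_iff)
qed

lemma sum_words_from_Suc_on_circle:
  assumes j: "j \<in> {1..K}" and z: "cmod (z - c j) = R j"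
  shows "(\<Sum>w\<in>words_from j (Suc M). ln (cmod (z - pt w))) = sum_avoiding j M z + reflection_const j M"
proof -
  have "(\<Sum>w\<in>words_from j (Suc M). ln (cmod (z - pt w)))
      = (\<Sum>v\<in>words_avoiding j M. ln (cmod (z - T j (pt v))))"
    unfolding words_from_Suc[OF j] by (subst sum.reindex) (auto simp: inj_on_def word_pt_def)
  also have "\<dots> = (\<Sum>v\<in>words_avoiding j M. ln (cmod (z - pt v)) + (ln (R j) - ln (cmod (pt v - c j))))"
  proof (rule sum.cong[OF refl])
    fix v assume "v \<in> words_avoiding j M"
    then have far: "cmod (pt v - c j) > R j"
      using source_dist_centre(2)[OF j word_pt_avoiding_source[OF j]] by blast
    moreover have "R j > 0" using R_pos j by blast
    ultimately have "cmod (z - pt v) > 0" "pt v \<noteq> c j" using z by auto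
    then show "ln (cmod (z - T j (pt v))) = ln (cmod (z - pt v)) + (ln (R j) - ln (cmod (pt v - c j)))"
      using dist_inv_circ_on_circle[of z c j R "pt v", OF z] \<open>R j > 0\<close> by (simp add: ln_mult ln_div)
  qed
  also have "\<dots> = sum_avoiding j M z + reflection_const j M"
    by (simp add: sum_avoiding_def reflection_const_def sum.distrib)
  finally show ?thesis .
qed

lemma alternating_level_sums_on_circle:
  assumes j: "j \<in> {1..K}" and z: "cmod (z - c j) = R j"
  shows "(\<Sum>M\<le>N. (-1) ^ M * level_sum M z)
       = (-1) ^ N * sum_avoiding j N z + (\<Sum>m<N. (-1) ^ Suc m * reflection_const j m)"
proof (induction N)
  case 0
  have "words_from j 0 = {}" by (auto simp: words_from_def words_0)
  then show ?case using level_sum_split[of 0 z j] by simp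
next
  case (Suc N)
  then show ?case
    using level_sum_split[of "Suc N" z j] sum_words_from_Suc_on_circle[OF j z, of N]
    by (simp add: algebra_simps)
qed

lemma psi_s_star_on_circle:
  assumes j: "j \<in> {1..K}" and z: "cmod (z - c j) = R j" and N: "N \<ge> 1"
  shows "psi_s_star K c R z0 N z = circle_const j N + circle_error j N z"
proof -
  define \<gamma> where "\<gamma> n = (\<Sum>m<n. (-1) ^ Suc m * reflection_const j m)" for n
  have D: "layer_diff (words_avoiding j N) z = (real K - 1) * sum_avoiding j N z - sum_avoiding j (Suc N) z"
    using layer_diff_eq[OF N, of "\<lambda>w. w = [] \<or> hd w \<noteq> j" z]
    by (simp add: words_avoiding_def sum_avoiding_def)
  have num: "(real K - 1) * ((-1) ^ N * sum_avoiding j N z + \<gamma> N)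
      + ((-1) ^ Suc N * sum_avoiding j (Suc N) z + \<gamma> (Suc N))
      = ((real K - 1) * \<gamma> N + \<gamma> (Suc N)) + (-1) ^ N * layer_diff (words_avoiding j N) z"
    unfolding D by (simp add: algebra_simps)
  have "psi_s_star K c R z0 N z = - ((real K - 1) * ((-1) ^ N * sum_avoiding j N z + \<gamma> N)
      + ((-1) ^ Suc N * sum_avoiding j (Suc N) z + \<gamma> (Suc N))) / (2 * pi * K)"
    unfolding psi_s_star_level_sums alternating_level_sums_on_circle[OF j z] \<gamma>_def ..
  also have "\<dots> = - (((real K - 1) * \<gamma> N + \<gamma> (Suc N)) + (-1) ^ N * layer_diff (words_avoiding j N) z)
      / (2 * pi * K)"
    by (simp only: num)
  also have "\<dots> = circle_const j N + circle_error j N z"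
    unfolding circle_const_def circle_error_def \<gamma>_def using K_pos by (simp add: field_simps)
  finally show ?thesis .
qed

lemma abs_circle_error_le:
  assumes "margin d z" "N \<ge> 1"
  shows "\<bar>circle_error j N z\<bar> \<le> jump / (2 * pi * d) * rate ^ N"
  using abs_layer_diff_le[OF assms(1) _ assms(2), of "words_avoiding j N"] K_pos
  by (simp add: circle_error_def words_avoiding_def abs_mult abs_divide field_simps)

lemma eventually_psi_s_star_on_circle:
  assumes j: "j \<in> {1..K}"
  shows "\<forall>\<^sub>F N in sequentially. \<forall>z\<in>sphere (c j) (R j).
           psi_s_star K c R z0 N z = circle_const j N + circle_error j N z"
proof -
  have on_circle: "cmod (z - c j) = R j" if "z \<in> sphere (c j) (R j)" for z
    using that by (simp add: dist_norm norm_minus_commute)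
  show ?thesis
    using eventually_ge_at_top[of 1]
    by (rule eventually_mono) (simp add: psi_s_star_on_circle[OF j on_circle])
qed

lemma uniform_limit_circle_error:
  assumes j: "j \<in> {1..K}"
  shows "uniform_limit (sphere (c j) (R j)) (circle_error j) (\<lambda>z. 0) sequentially"
proof -
  obtain d where d: "\<forall>z\<in>sphere (c j) (R j). margin d z" using margin_circle[OF j] by blast
  have bound: "\<forall>\<^sub>F N in sequentially. \<forall>z\<in>sphere (c j) (R j).
      norm (circle_error j N z) \<le> jump / (2 * pi * d) * rate ^ N"
    using eventually_ge_at_top[of 1]
  proof (rule eventually_mono)
    fix N :: nat assume N: "N \<ge> 1"
    show "\<forall>z\<in>sphere (c j) (R j). norm (circle_error j N z) \<le> jump / (2 * pi * d) * rate ^ N"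
    proof
      fix z assume "z \<in> sphere (c j) (R j)"
      then show "norm (circle_error j N z) \<le> jump / (2 * pi * d) * rate ^ N"
        using abs_circle_error_le[of d z N j] d N by simp
    qed
  qed
  have "(\<lambda>N. rate ^ N) \<longlonglongrightarrow> 0"
    by (rule LIMSEQ_power_zero) (use rate_nonneg rate_less_1 in auto)
  then have "(\<lambda>N. jump / (2 * pi * d) * rate ^ N) \<longlonglongrightarrow> 0"
    by (rule tendsto_mult_right_zero)
  then show ?thesis
    by (rule uniform_limit_null_comparison[OF bound tendsto_imp_uniform_limit_const])
qed

text \<open>The constants converge because \<open>\<psi>\<^sup>s\<^sup>*\<^sub>N\<close> does at any single point of the circle.\<close>
lemma convergent_circle_const:
  assumes j: "j \<in> {1..K}"
  shows "convergent (circle_const j)"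
proof -
  define z1 where "z1 = c j + of_real (R j)"
  have "R j > 0" using R_pos j by blast
  then have z1: "z1 \<in> sphere (c j) (R j)" by (simp add: z1_def dist_norm)
  then have "margin d z1" if "\<forall>z\<in>sphere (c j) (R j). margin d z" for d
    using that by blast
  then obtain L where "(\<lambda>N. h_approx N z1) \<longlonglongrightarrow> L"
    using margin_circle[OF j] convergent_h_approx convergent_def by metis
  then have "(\<lambda>N. psi_s_star K c R z0 N z1 - circle_error j N z1)
      \<longlonglongrightarrow> L - ln (cmod (z1 - z0)) / (2 * pi) - 0"
    unfolding psi_s_star_eq_h_approx
    by (intro tendsto_intros tendsto_uniform_limitI[OF uniform_limit_circle_error[OF j] z1])
  moreover have "\<forall>\<^sub>F N in sequentially. psi_s_star K c R z0 N z1 - circle_error j N z1 = circle_const j N"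
    using eventually_psi_s_star_on_circle[OF j] by (rule eventually_mono) (drule bspec[OF _ z1], simp)
  ultimately show ?thesis
    using Lim_transform_eventually convergentI by blast
qed

lemma psi_s_star_uniform_limit_circle:
  assumes j: "j \<in> {1..K}"
  shows "\<exists>C. uniform_limit (sphere (c j) (R j)) (\<lambda>N z. psi_s_star K c R z0 N z) (\<lambda>z. C) sequentially"
proof -
  obtain C where "circle_const j \<longlonglongrightarrow> C"
    using convergent_circle_const[OF j] convergent_def by blast
  then have "uniform_limit (sphere (c j) (R j)) (\<lambda>N z. circle_const j N + circle_error j N z)
      (\<lambda>z. C + 0) sequentially"
    by (intro uniform_limit_add tendsto_imp_uniform_limit_const uniform_limit_circle_error[OF j])
  then show ?thesis
    by (auto simp: uniform_limit_cong[OF eventually_psi_s_star_on_circle[OF j] refl])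
qed

section \<open>Harmonicity in the exterior domain\<close>

lemma harmonic_on_h_approx: "harmonic_on (Dfin K c R) (h_approx N)"
proof (rule harmonic_on_locally_Re_holomorphic[OF _ open_Dfin])
  show "locally_Re_holomorphic (Dfin K c R) (h_approx N)"
    unfolding locally_Re_holomorphic_def
  proof
    fix a assume "a \<in> Dfin K c R"
    then obtain d where a: "margin d a" using margin_Dfin by blast
    have "(\<lambda>z. h_approx_Ln a N z + of_real (h_approx N a)) holomorphic_on ball a (d / 2)"
      using holomorphic_on_h_approx_Ln[OF a] by (intro holomorphic_intros)
    moreover have "\<forall>x\<in>ball a (d / 2). h_approx N x = Re (h_approx_Ln a N x + of_real (h_approx N a))"
      using Re_h_approx_Ln[OF a] by simp
    moreover have "d / 2 > 0" using a by (simp add: margin_def)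
    ultimately show "\<exists>r>0. \<exists>g. g holomorphic_on ball a r \<and> (\<forall>x\<in>ball a r. h_approx N x = Re (g x))"
      by blast
  qed
qed

lemma locally_Re_holomorphic_lim_h_approx:
  "locally_Re_holomorphic (Dfin K c R) (\<lambda>z. lim (\<lambda>N. h_approx N z))"
  unfolding locally_Re_holomorphic_def
proof
  fix a assume "a \<in> Dfin K c R"
  then obtain d where a: "margin d a" using margin_Dfin by blast
  then obtain g where "g holomorphic_on ball a (d / 4)"
    "\<forall>z\<in>ball a (d / 4). (\<lambda>N. h_approx N z) \<longlonglongrightarrow> Re (g z)"
    using h_approx_local_limit by blast
  moreover have "d / 4 > 0" using a by (simp add: margin_def)
  ultimately show "\<exists>r>0. \<exists>g. g holomorphic_on ball a r \<and>
      (\<forall>x\<in>ball a r. lim (\<lambda>N. h_approx N x) = Re (g x))"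
    using limI by blast
qed

lemma psi_s_star_tendsto:
  assumes "z \<in> Dfin K c R"
  shows "(\<lambda>N. psi_s_star K c R z0 N z) \<longlonglongrightarrow> lim (\<lambda>N. h_approx N z) - ln (cmod (z - z0)) / (2 * pi)"
proof -
  obtain d where "margin d z" using margin_Dfin[OF assms] by blast
  then have "(\<lambda>N. h_approx N z) \<longlonglongrightarrow> lim (\<lambda>N. h_approx N z)"
    using convergent_h_approx convergent_LIMSEQ_iff by blast
  then show ?thesis
    unfolding psi_s_star_eq_h_approx by (intro tendsto_diff tendsto_const)
qed

lemma harmonic_on_lim_psi_s_star:
  "harmonic_on (Dfin K c R - {z0}) (\<lambda>z. lim (\<lambda>N. psi_s_star K c R z0 N z))"
proof (rule harmonic_on_locally_Re_holomorphic)
  show "open (Dfin K c R - {z0})" using open_Dfin by (rule open_delete)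
  have lim_h: "locally_Re_holomorphic (Dfin K c R - {z0})
      (\<lambda>z. lim (\<lambda>N. h_approx N z) - 1 / (2 * pi) * ln (cmod (z - z0)))"
    using locally_Re_holomorphic_subset[OF locally_Re_holomorphic_lim_h_approx]
      locally_Re_holomorphic_ln_dist[of z0]
    by (intro locally_Re_holomorphic_diff_scaled) auto
  have "\<forall>z\<in>Dfin K c R - {z0}. lim (\<lambda>N. h_approx N z) - 1 / (2 * pi) * ln (cmod (z - z0))
      = lim (\<lambda>N. psi_s_star K c R z0 N z)"
    using limI[OF psi_s_star_tendsto] by simp
  then show "locally_Re_holomorphic (Dfin K c R - {z0}) (\<lambda>z. lim (\<lambda>N. psi_s_star K c R z0 N z))"
    by (rule locally_Re_holomorphic_cong[OF lim_h open_delete[OF open_Dfin]])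
qed

lemma lim_psi_s_star_log_extends:
  "\<exists>e>0. \<exists>g. harmonic_on (ball z0 e) g \<and>
     (\<forall>z\<in>ball z0 e - {z0}. g z = lim (\<lambda>N. psi_s_star K c R z0 N z) + ln (cmod (z - z0)) / (2 * pi))"
proof -
  obtain e where e: "e > 0" "ball z0 e \<subseteq> Dfin K c R"
    using open_Dfin z0_in_D openE by blast
  then have "harmonic_on (ball z0 e) (\<lambda>z. lim (\<lambda>N. h_approx N z))"
    using locally_Re_holomorphic_subset[OF locally_Re_holomorphic_lim_h_approx]
    by (intro harmonic_on_locally_Re_holomorphic) auto
  moreover have "\<forall>z\<in>ball z0 e - {z0}.
      lim (\<lambda>N. h_approx N z) = lim (\<lambda>N. psi_s_star K c R z0 N z) + ln (cmod (z - z0)) / (2 * pi)"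
    using e(2) limI[OF psi_s_star_tendsto] by auto
  ultimately show ?thesis using e(1) by blast
qed

end


theorem mainTheorem1:
  fixes K :: nat and c :: "nat \<Rightarrow> complex" and R :: "nat \<Rightarrow> real" and z0 :: complex
  assumes K2: "K \<ge> 2"
    and Rpos: "\<forall>j\<in>{1..K}. R j > 0"
    and disj: "\<forall>i\<in>{1..K}. \<forall>j\<in>{1..K}. i \<noteq> j \<longrightarrow> cball (c i) (R i) \<inter> cball (c j) (R j) = {}"
    and z0D: "z0 \<in> Dfin K c R"
    and small: "(real K - 1) * (Pmax K c R z0)\<^sup>2 < 1"
  shows
    "(\<exists>h :: nat \<Rightarrow> complex \<Rightarrow> real.
        (\<forall>N. harmonic_on (Dfin K c R) (h N)) \<and>
        (\<forall>N. \<forall>z\<in>Dfin K c R - {z0}.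
              h N z = psi_s_star K c R z0 N z + ln (cmod (z - z0)) / (2 * pi)) \<and>
        (\<forall>S. compact S \<and> S \<subseteq> Dfin K c R \<longrightarrow> uniformly_convergent_on S h))
     \<and> (\<forall>z\<in>Dfin K c R - {z0}. convergent (\<lambda>N. psi_s_star K c R z0 N z))
     \<and> harmonic_on (Dfin K c R - {z0}) (\<lambda>z. lim (\<lambda>N. psi_s_star K c R z0 N z))
     \<and> (\<exists>e>0. \<exists>g. harmonic_on (ball z0 e) g \<and>
          (\<forall>z\<in>ball z0 e - {z0}.
             g z = lim (\<lambda>N. psi_s_star K c R z0 N z) + ln (cmod (z - z0)) / (2 * pi)))
     \<and> (\<forall>j\<in>{1..K}. \<exists>C::real.
          uniform_limit (sphere (c j) (R j)) (\<lambda>N z. psi_s_star K c R z0 N z) (\<lambda>z. C) sequentially)"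
proof -
  interpret circle_configuration K c R z0
    using assms by unfold_locales
  have "uniformly_convergent_on S h_approx" if "compact S" "S \<subseteq> Dfin K c R" for S
    using margin_compact_Dfin[OF that] uniformly_convergent_h_approx by blast
  moreover have "convergent (\<lambda>N. psi_s_star K c R z0 N z)" if "z \<in> Dfin K c R" for z
    using psi_s_star_tendsto[OF that] by (rule convergentI)
  ultimately show ?thesis
    using harmonic_on_h_approx psi_s_star_eq_h_approx harmonic_on_lim_psi_s_star
      lim_psi_s_star_log_extends psi_s_star_uniform_limit_circle
    by (intro conjI exI[of _ h_approx]) auto
qed

end
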